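(* $22 \le R(B_4,B_7) \le 23$.
   Context: For graphs $G,H$, the Ramsey number $R(G,H)$ is the smallest integer $N$ such that every red/blue coloring of the edges of $K_N$ contains a red copy of $G$ (as a subgraph, not necessarily induced) or a blue copy of $H$. The book $B_k$ is the graph on $k+2$ vertices consisting of an edge $uv$ together with $k$ further vertices, each adjacent exactly to $u$ and $v$. *)

theory Defs
  imports Main
begin

text \<open>A red/blue edge colouring of the complete graph on vertex set V is represented by a
symmetric predicate c (c x y = True means the edge xy is red, False means blue); only
values on pairs of distinct vertices of V matter.\<close>

definition colouring :: "nat set \<Rightarrow> (nat \<Rightarrow> nat \<Rightarrow> bool) \<Rightarrow> bool" where
  "colouring V c \<longleftrightarrow> (\<forall>x\<in>V. \<forall>y\<in>V. c x y = c y x)"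

text \<open>The complete graph on V contains a copy of the book B_k all of whose edges satisfy P:
a spine uv and k further vertices each joined to both u and v.\<close>

definition has_book :: "nat set \<Rightarrow> (nat \<Rightarrow> nat \<Rightarrow> bool) \<Rightarrow> nat \<Rightarrow> bool" where
  "has_book V P k \<longleftrightarrow> (\<exists>u\<in>V. \<exists>v\<in>V. \<exists>S. u \<noteq> v \<and> P u v \<and> S \<subseteq> V - {u, v}
      \<and> card S = k \<and> (\<forall>w\<in>S. P u w \<and> P v w))"

definition book_arrows :: "nat \<Rightarrow> nat \<Rightarrow> nat \<Rightarrow> bool" where
  "book_arrows N k l \<longleftrightarrow> (\<forall>c. colouring {..<N} c \<longrightarrow>
      has_book {..<N} c k \<or> has_book {..<N} (\<lambda>x y. \<not> c x y) l)"

definition ramsey_book :: "nat \<Rightarrow> nat \<Rightarrow> nat" where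
  "ramsey_book k l = (LEAST N. book_arrows N k l)"

end

theory Submission
  imports Defs "Jordan_Normal_Form.Schur_Decomposition"
begin

text \<open>
  Upper bound: in a colouring of \<open>K\<^sub>2\<^sub>3\<close> without red \<open>B\<^sub>4\<close> and blue \<open>B\<^sub>7\<close>, every red edge has
  at most 3 red common neighbours and every blue edge at most 6 blue ones. Summing these slacks
  over all vertices and expressing everything through the red degrees \<open>d(u)\<close> gives
  \<open>\<Sum>\<^sub>u slack(u) = -3 \<Sum>\<^sub>u (d(u) - 10)(d(u) - 11) \<le> 0\<close>, so all slacks vanish and every degree is
  10 or 11. Twice the number of red triangles at \<open>u\<close> is then \<open>3 d(u)\<close>, so all degrees are 10
  and the red graph is strongly regular with parameters \<open>(23, 10, 3, 5)\<close>. Its adjacency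
  eigenvalues other than 10 are \<open>-1 \<plusminus> \<surd>6\<close>; as the trace is 0 and \<open>\<surd>6\<close> is irrational, these
  occur equally often, and the multiplicity \<open>m\<close> of 10 satisfies \<open>10 m = 23 - m\<close>, impossible.

  Lower bound: an explicit colouring of \<open>K\<^sub>2\<^sub>1\<close>, checked by evaluation.
\<close>

lemma has_book_iff:
  assumes "finite V"
  shows "has_book V P k \<longleftrightarrow>
    (\<exists>u\<in>V. \<exists>v\<in>V. u \<noteq> v \<and> P u v \<and> k \<le> card {w \<in> V - {u, v}. P u w \<and> P v w})"
proof
  assume "has_book V P k"
  then obtain u v S where uv: "u \<in> V" "v \<in> V" "u \<noteq> v" "P u v"
    and S: "S \<subseteq> {w \<in> V - {u, v}. P u w \<and> P v w}" "card S = k"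
    unfolding has_book_def by blast
  have "k \<le> card {w \<in> V - {u, v}. P u w \<and> P v w}"
    using S assms by (metis (no_types, lifting) card_mono finite_Diff finite_subset mem_Collect_eq subsetI)
  with uv show "\<exists>u\<in>V. \<exists>v\<in>V. u \<noteq> v \<and> P u v \<and> k \<le> card {w \<in> V - {u, v}. P u w \<and> P v w}"
    by blast
next
  assume "\<exists>u\<in>V. \<exists>v\<in>V. u \<noteq> v \<and> P u v \<and> k \<le> card {w \<in> V - {u, v}. P u w \<and> P v w}"
  then obtain u v where uv: "u \<in> V" "v \<in> V" "u \<noteq> v" "P u v"
    and "k \<le> card {w \<in> V - {u, v}. P u w \<and> P v w}"
    by blast
  then obtain S where "S \<subseteq> {w \<in> V - {u, v}. P u w \<and> P v w}" "card S = k"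
    by (meson obtain_subset_with_card_n)
  with uv show "has_book V P k"
    unfolding has_book_def by blast
qed

lemma common_nbrs_less_if_no_book:
  assumes "finite V" "u \<in> V" "v \<in> V" "u \<noteq> v" "P u v" "\<not> has_book V P k"
  shows "card {w \<in> V - {u, v}. P u w \<and> P v w} < k"
proof -
  have "\<not> k \<le> card {w \<in> V - {u, v}. P u w \<and> P v w}"
    using has_book_iff[OF assms(1), of P k] assms(2-6) by blast
  then show ?thesis by simp
qed

lemma has_book_mono: "has_book V P k \<Longrightarrow> V \<subseteq> W \<Longrightarrow> has_book W P k"
  unfolding has_book_def by blast

lemma has_book_lessThan_code:
  "has_book {..<n} P k \<longleftrightarrow> (\<exists>u\<in>set [0..<n]. \<exists>v\<in>set [0..<n]. u \<noteq> v \<and> P u v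
    \<and> k \<le> length (filter (\<lambda>w. w \<noteq> u \<and> w \<noteq> v \<and> P u w \<and> P v w) [0..<n]))"
proof -
  have "card {w \<in> {..<n} - {u, v}. P u w \<and> P v w}
      = length (filter (\<lambda>w. w \<noteq> u \<and> w \<noteq> v \<and> P u w \<and> P v w) [0..<n])" for u v
    by (subst distinct_card[symmetric]) (auto intro!: arg_cong[where f = card])
  then show ?thesis
    by (simp add: has_book_iff lessThan_atLeast0)
qed

lemma even_sum_symmetric:
  fixes f :: "nat \<Rightarrow> nat \<Rightarrow> int"
  assumes "\<And>v w. f v w = f w v" "\<And>v. f v v = 0"
  shows "even (\<Sum>v<n. \<Sum>w<n. f v w)"
proof (induction n)
  case (Suc n)
  have "(\<Sum>v<Suc n. \<Sum>w<Suc n. f v w)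
      = (\<Sum>v<n. \<Sum>w<n. f v w) + (\<Sum>v<n. f v n) + (\<Sum>w<n. f n w)"
    using assms(2) by (simp add: sum.distrib lessThan_Suc algebra_simps)
  also have "\<dots> = (\<Sum>v<n. \<Sum>w<n. f v w) + 2 * (\<Sum>w<n. f n w)"
    using assms(1) by simp
  finally show ?case
    using Suc.IH by (metis dvd_add dvd_triv_left)
qed simp

definition trace :: "'a::comm_ring_1 mat \<Rightarrow> 'a" where
  "trace A = (\<Sum>i<dim_row A. A $$ (i, i))"

lemma trace_mult_comm:
  assumes "A \<in> carrier_mat n m" "B \<in> carrier_mat m n"
  shows "trace (A * B) = trace (B * A)"
proof -
  have "trace (A * B) = (\<Sum>i<n. \<Sum>k<m. A $$ (i, k) * B $$ (k, i))"
    using assms by (simp add: trace_def scalar_prod_def atLeast0LessThan)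
  also have "\<dots> = (\<Sum>k<m. \<Sum>i<n. B $$ (k, i) * A $$ (i, k))"
    by (subst sum.swap) (simp add: mult.commute)
  also have "\<dots> = trace (B * A)"
    using assms by (simp add: trace_def scalar_prod_def atLeast0LessThan)
  finally show ?thesis .
qed

lemma sum_eigenvalues_eq_trace:
  fixes A :: "complex mat"
  assumes A: "A \<in> carrier_mat n n" and es: "char_poly A = (\<Prod>a\<leftarrow>es. [:- a, 1:])"
  shows "sum_list es = trace A"
proof -
  obtain B P Q where "schur_decomposition A es = (B, P, Q)"
    by (cases "schur_decomposition A es") auto
  from schur_decomposition[OF A es this]
  have "similar_mat_wit A B P Q" and diag: "diag_mat B = es" by auto
  then have car: "B \<in> carrier_mat n n" "P \<in> carrier_mat n n" "Q \<in> carrier_mat n n"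
    and "Q * P = 1\<^sub>m n" "A = P * B * Q"
    unfolding similar_mat_wit_def using A by (auto simp: Let_def)
  then have "trace A = trace (Q * (P * B))"
    by (metis trace_mult_comm assoc_mult_mat mult_carrier_mat)
  also have "\<dots> = trace B"
    using car \<open>Q * P = 1\<^sub>m n\<close> by (simp add: assoc_mult_mat[symmetric])
  also have "\<dots> = sum_list es"
    using car unfolding diag[symmetric] trace_def diag_mat_def
    by (simp add: sum_list_sum_nth atLeast0LessThan)
  finally show ?thesis by simp
qed

lemma int_square_eq_6_square:
  fixes a b :: int
  assumes "a\<^sup>2 = 6 * b\<^sup>2"
  shows "b = 0"
  using assms
proof (induction "nat \<bar>a\<bar>" arbitrary: a b rule: less_induct)
  case less
  show ?case
  proof (cases "a = 0")
    case False
    have "even (a\<^sup>2)"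
      using less.prems by simp
    then obtain a' where a: "a = 2 * a'"
      by (auto elim: evenE)
    then have "2 * a'\<^sup>2 = 3 * b\<^sup>2"
      using less.prems by (simp add: power_mult_distrib)
    then have "even (3 * b\<^sup>2)"
      by (metis dvd_triv_left)
    then obtain b' where b: "b = 2 * b'"
      by (auto elim: evenE)
    have "a'\<^sup>2 = 6 * b'\<^sup>2"
      using less.prems a b by (simp add: power2_eq_square)
    moreover have "nat \<bar>a'\<bar> < nat \<bar>a\<bar>"
      using False a by simp
    ultimately have "b' = 0"
      using less.hyps by blast
    with b show ?thesis by simp
  qed (use less.prems in simp)
qed

lemma sqrt_6_coeff_eq_0:
  assumes "real_of_int a + real_of_int b * sqrt 6 = 0"
  shows "b = 0"
proof -
  have "real_of_int a = - real_of_int b * sqrt 6"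
    using assms by simp
  then have "real_of_int (a\<^sup>2) = real_of_int (6 * b\<^sup>2)"
    by (simp add: power_mult_distrib)
  then show ?thesis
    using int_square_eq_6_square of_int_eq_iff by blast
qed

lemma sum_list_linear_combination:
  "sum_list (map (\<lambda>x. of_int (f x) + of_int (g x) * w) xs)
    = of_int (sum_list (map f xs)) + of_int (sum_list (map g xs)) * (w :: 'a :: comm_ring_1)"
  by (induction xs) (simp_all add: algebra_simps)

lemma eleven_dvd_length:
  fixes es :: "complex list"
  assumes roots: "\<And>e. e \<in> set es \<Longrightarrow> e = 10 \<or> e\<^sup>2 + 2 * e - 5 = 0"
    and sum_zero: "sum_list es = 0"
  shows "11 dvd length es"
proof -
  define w where "w = complex_of_real (sqrt 6)"
  have roots': "e = 10 \<or> e = w - 1 \<or> e = - w - 1" if "e \<in> set es" for e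
  proof -
    have "w * w = 6"
      by (simp add: w_def flip: of_real_mult)
    then have "e\<^sup>2 + 2 * e - 5 = (e + 1 - w) * (e + 1 + w)"
      by (simp add: algebra_simps power2_eq_square)
    then have "e = 10 \<or> e + 1 - w = 0 \<or> e + 1 + w = 0"
      using roots[OF that] by simp
    then show ?thesis
      by (auto simp: eq_diff_eq add_eq_0_iff2)
  qed
  text \<open>Write each root as \<open>a e + b e * w\<close> with integers \<open>a e \<equiv> -1 (mod 11)\<close>.\<close>
  define a :: "complex \<Rightarrow> int" where "a e = 11 * of_bool (e = 10) - 1" for e
  define b :: "complex \<Rightarrow> int" where "b e = (if e = 10 then 0 else if e = w - 1 then 1 else -1)" for e
  have "map (\<lambda>e. of_int (a e) + of_int (b e) * w) es = es"
    by (rule map_idI) (use roots' in \<open>auto simp: a_def b_def\<close>)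
  then have "of_int (sum_list (map a es)) + of_int (sum_list (map b es)) * w = 0"
    using sum_zero sum_list_linear_combination[of a b w es] by simp
  then have "complex_of_real
      (real_of_int (sum_list (map a es)) + real_of_int (sum_list (map b es)) * sqrt 6) = 0"
    unfolding w_def by simp
  then have "sum_list (map b es) = 0"
    by (intro sqrt_6_coeff_eq_0[of "sum_list (map a es)"]) (simp only: of_real_eq_0_iff)
  with \<open>of_int (sum_list (map a es)) + of_int (sum_list (map b es)) * w = 0\<close>
  have "sum_list (map a es) = 0"
    by simp
  moreover have "sum_list (map a es) = 11 * sum_list (map (\<lambda>e. of_bool (e = 10)) es) - int (length es)"
    by (induction es) (simp_all add: a_def)
  ultimately have "int (length es) = 11 * sum_list (map (\<lambda>e. of_bool (e = 10)) es)"
    by linarith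
  then show ?thesis
    by (metis dvd_triv_left int_dvd_int_iff of_nat_numeral)
qed

locale complete_colouring =
  fixes n :: nat and c :: "nat \<Rightarrow> nat \<Rightarrow> bool"
  assumes colouring: "colouring {..<n} c"
begin

abbreviation V :: "nat set" where "V \<equiv> {..<n}"

definition red :: "nat \<Rightarrow> nat \<Rightarrow> int" where
  "red u w = of_bool (u < n \<and> w < n \<and> u \<noteq> w \<and> c u w)"

definition blue :: "nat \<Rightarrow> nat \<Rightarrow> int" where
  "blue u w = of_bool (u < n \<and> w < n \<and> u \<noteq> w \<and> \<not> c u w)"

definition deg :: "nat \<Rightarrow> int" where
  "deg u = (\<Sum>w\<in>V. red u w)"

definition red_codeg :: "nat \<Rightarrow> nat \<Rightarrow> int" where
  "red_codeg u v = (\<Sum>w\<in>V. red u w * red v w)"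

definition blue_codeg :: "nat \<Rightarrow> nat \<Rightarrow> int" where
  "blue_codeg u v = (\<Sum>w\<in>V. blue u w * blue v w)"

definition deg_total :: int where
  "deg_total = (\<Sum>u\<in>V. deg u)"

definition nbr_deg :: "nat \<Rightarrow> int" where
  "nbr_deg u = (\<Sum>w\<in>V. red u w * deg w)"

definition tri_walks :: "nat \<Rightarrow> int" where
  "tri_walks u = (\<Sum>v\<in>V. red u v * red_codeg u v)"

lemma red_sym: "red u w = red w u"
  using colouring unfolding red_def colouring_def by auto

lemma red_diag [simp]: "red u u = 0"
  by (simp add: red_def)

lemma red_idem [simp]: "red u w * red u w = red u w"
  by (simp add: red_def)

lemma blue_eq: "u \<in> V \<Longrightarrow> w \<in> V \<Longrightarrow> blue u w = 1 - red u w - of_bool (u = w)"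
  by (auto simp: blue_def red_def)

lemma red_codeg_diag: "red_codeg u u = deg u"
  by (simp add: red_codeg_def deg_def)

lemma red_codeg_card:
  assumes "u \<in> V" "v \<in> V"
  shows "red_codeg u v = int (card {w \<in> V - {u, v}. c u w \<and> c v w})"
proof -
  have "red_codeg u v = (\<Sum>w\<in>V. of_bool (w \<in> V - {u, v} \<and> c u w \<and> c v w))"
    unfolding red_codeg_def using assms by (intro sum.cong) (auto simp: red_def)
  also have "\<dots> = int (card {w \<in> V - {u, v}. c u w \<and> c v w})"
    by (simp add: Int_def)
  finally show ?thesis .
qed

lemma blue_codeg_card:
  assumes "u \<in> V" "v \<in> V"
  shows "blue_codeg u v = int (card {w \<in> V - {u, v}. \<not> c u w \<and> \<not> c v w})"
proof -
  have "blue_codeg u v = (\<Sum>w\<in>V. of_bool (w \<in> V - {u, v} \<and> \<not> c u w \<and> \<not> c v w))"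
    unfolding blue_codeg_def using assms by (intro sum.cong) (auto simp: blue_def)
  also have "\<dots> = int (card {w \<in> V - {u, v}. \<not> c u w \<and> \<not> c v w})"
    by (simp add: Int_def)
  finally show ?thesis .
qed

lemma blue_codeg_eq:
  assumes "u \<in> V" "v \<in> V"
  shows "blue_codeg u v
    = int n - 2 - deg u - deg v + red_codeg u v + 2 * red u v + of_bool (u = v)"
proof -
  have "blue_codeg u v = (\<Sum>w\<in>V. 1 - red u w - red v w + red u w * red v w
      - of_bool (u = w) - of_bool (v = w) + of_bool (u = w) * red v w
      + red u w * of_bool (v = w) + of_bool (u = w) * of_bool (v = w))"
    unfolding blue_codeg_def using assms by (intro sum.cong) (auto simp: blue_eq algebra_simps)
  also have "\<dots> = int n - deg u - deg v + red_codeg u v - 1 - 1 + red v u + red u v + of_bool (u = v)"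
    using assms by (simp add: sum.distrib sum_subtractf deg_def red_codeg_def)
  finally show ?thesis by (simp add: red_sym[of v u])
qed

lemma sum_red_codeg: "(\<Sum>v\<in>V. red_codeg u v) = nbr_deg u"
proof -
  have "(\<Sum>v\<in>V. red_codeg u v) = (\<Sum>w\<in>V. \<Sum>v\<in>V. red u w * red v w)"
    unfolding red_codeg_def by (rule sum.swap)
  also have "\<dots> = nbr_deg u"
    unfolding nbr_deg_def deg_def by (simp add: sum_distrib_left red_sym)
  finally show ?thesis .
qed

lemma sum_nbr_deg: "(\<Sum>u\<in>V. nbr_deg u) = (\<Sum>u\<in>V. deg u ^ 2)"
proof -
  have "(\<Sum>u\<in>V. nbr_deg u) = (\<Sum>w\<in>V. \<Sum>u\<in>V. red u w * deg w)"
    unfolding nbr_deg_def by (rule sum.swap)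
  also have "\<dots> = (\<Sum>w\<in>V. deg w ^ 2)"
    unfolding deg_def by (simp add: sum_distrib_right red_sym power2_eq_square)
  finally show ?thesis .
qed

lemma even_tri_walks: "even (tri_walks u)"
proof -
  have "tri_walks u = (\<Sum>v<n. \<Sum>w<n. red u v * red u w * red v w)"
    unfolding tri_walks_def red_codeg_def by (simp add: sum_distrib_left mult.assoc)
  also have "even \<dots>"
    by (rule even_sum_symmetric) (auto simp: red_sym)
  finally show ?thesis .
qed

lemma sum_blue: "u \<in> V \<Longrightarrow> (\<Sum>v\<in>V. blue u v) = int n - 1 - deg u"
  by (simp add: blue_eq sum_subtractf deg_def)

lemma sum_blue_codeg:
  "u \<in> V \<Longrightarrow> (\<Sum>v\<in>V. blue_codeg u v) = int n * (int n - 2) - int n * deg u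
    - deg_total + nbr_deg u + 2 * deg u + 1"
  by (simp add: blue_codeg_eq sum.distrib sum_subtractf sum_red_codeg right_diff_distrib
      sum_distrib_left[symmetric] deg_def[symmetric] deg_total_def)

lemma sum_red_blue_codeg:
  assumes "u \<in> V"
  shows "(\<Sum>v\<in>V. red u v * blue_codeg u v) = (int n - 2) * deg u - deg u ^ 2
    - nbr_deg u + tri_walks u + 2 * deg u"
proof -
  have "(\<Sum>v\<in>V. red u v * blue_codeg u v) = (\<Sum>v\<in>V. (int n - 2 - deg u) * red u v
      - red u v * deg v + red u v * red_codeg u v + 2 * red u v)"
    using assms by (intro sum.cong) (auto simp: blue_codeg_eq algebra_simps)
  also have "\<dots> = (int n - 2 - deg u) * deg u - nbr_deg u + tri_walks u + 2 * deg u"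
    unfolding deg_def nbr_deg_def tri_walks_def
    by (simp add: sum.distrib sum_subtractf sum_distrib_left)
  finally show ?thesis by (simp add: power2_eq_square algebra_simps)
qed

definition adj :: "complex mat" where
  "adj = mat n n (\<lambda>(i, j). of_int (red i j))"

lemma adj_carrier: "adj \<in> carrier_mat n n"
  by (simp add: adj_def)

lemma trace_adj: "trace adj = 0"
  by (simp add: trace_def adj_def)

lemma eigenvalue_adj_strongly_regular:
  assumes deg: "\<And>u. u \<in> V \<Longrightarrow> deg u = d"
    and codeg: "\<And>u v. u \<in> V \<Longrightarrow> v \<in> V \<Longrightarrow>
      red_codeg u v = \<mu> + (d - \<mu>) * of_bool (u = v) + (lam - \<mu>) * red u v"
    and "eigenvalue adj e"
  shows "e = of_int d \<or> e\<^sup>2 - of_int (lam - \<mu>) * e - of_int (d - \<mu>) = 0"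
proof -
  obtain x where x: "x \<in> carrier_vec n" "x \<noteq> 0\<^sub>v n" "adj *\<^sub>v x = e \<cdot>\<^sub>v x"
    using assms(3) unfolding eigenvalue_def eigenvector_def adj_def by auto
  have eig: "(\<Sum>j\<in>V. of_int (red i j) * x $ j) = e * x $ i" if "i \<in> V" for i
  proof -
    have "(adj *\<^sub>v x) $ i = (e \<cdot>\<^sub>v x) $ i" using x(3) by simp
    then show ?thesis
      using that x(1) by (simp add: adj_def scalar_prod_def atLeast0LessThan)
  qed
  define \<sigma> where "\<sigma> = (\<Sum>j\<in>V. x $ j)"
  have "e * \<sigma> = (\<Sum>i\<in>V. \<Sum>j\<in>V. of_int (red i j) * x $ j)"
    by (simp add: \<sigma>_def sum_distrib_left eig)
  also have "\<dots> = (\<Sum>j\<in>V. of_int (\<Sum>i\<in>V. red j i) * x $ j)"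
    by (subst sum.swap) (simp add: sum_distrib_right red_sym)
  also have "\<dots> = of_int d * \<sigma>"
    by (simp add: \<sigma>_def sum_distrib_left deg_def[symmetric] deg)
  finally have row_sums: "e * \<sigma> = of_int d * \<sigma>" .
  have square: "e\<^sup>2 * x $ i = of_int \<mu> * \<sigma> + of_int (d - \<mu>) * x $ i + of_int (lam - \<mu>) * e * x $ i"
    if i: "i \<in> V" for i
  proof -
    have "e\<^sup>2 * x $ i = (\<Sum>k\<in>V. of_int (red i k) * (e * x $ k))"
      using eig[OF i] by (simp add: power2_eq_square sum_distrib_left[symmetric] mult.left_commute)
    also have "\<dots> = (\<Sum>k\<in>V. of_int (red i k) * (\<Sum>j\<in>V. of_int (red k j) * x $ j))"
      by (intro sum.cong refl) (simp add: eig)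
    also have "\<dots> = (\<Sum>k\<in>V. \<Sum>j\<in>V. of_int (red i k) * of_int (red k j) * x $ j)"
      by (simp add: sum_distrib_left mult.assoc)
    also have "\<dots> = (\<Sum>j\<in>V. \<Sum>k\<in>V. of_int (red i k) * of_int (red k j) * x $ j)"
      by (rule sum.swap)
    also have "\<dots> = (\<Sum>j\<in>V. of_int (red_codeg i j) * x $ j)"
      by (simp add: red_codeg_def sum_distrib_right red_sym)
    also have "\<dots> = (\<Sum>j\<in>V. of_int \<mu> * x $ j + of_int (d - \<mu>) * (of_bool (i = j) * x $ j)
        + of_int (lam - \<mu>) * (of_int (red i j) * x $ j))"
      using i by (intro sum.cong refl) (simp add: codeg algebra_simps)
    also have "\<dots> = of_int \<mu> * \<sigma> + of_int (d - \<mu>) * x $ i + of_int (lam - \<mu>) * e * x $ i"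
      using i by (simp add: sum.distrib sum_distrib_left[symmetric] \<sigma>_def eig mult.assoc)
    finally show ?thesis .
  qed
  show ?thesis
  proof (cases "e = of_int d")
    case False
    with row_sums have "\<sigma> = 0" by simp
    obtain i where i: "i \<in> V" "x $ i \<noteq> 0"
      using x(1,2) by (metis eq_vecI carrier_vecD index_zero_vec lessThan_iff)
    have "(e\<^sup>2 - of_int (lam - \<mu>) * e - of_int (d - \<mu>)) * x $ i = 0"
      using square[OF i(1)] \<open>\<sigma> = 0\<close> by (simp add: algebra_simps)
    with i(2) show ?thesis by simp
  qed simp
qed

end

locale book_free_colouring = complete_colouring +
  fixes k l :: nat
  assumes no_red_book: "\<not> has_book V c k"
    and no_blue_book: "\<not> has_book V (\<lambda>x y. \<not> c x y) l"
begin

definition slack :: "nat \<Rightarrow> int" where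
  "slack u = (\<Sum>v\<in>V. red u v * (int k - 1 - red_codeg u v))
    + (\<Sum>v\<in>V. blue u v * (int l - 1 - blue_codeg u v))"

lemma red_codeg_less: "red u v = 1 \<Longrightarrow> red_codeg u v < int k"
  using common_nbrs_less_if_no_book[OF _ _ _ _ _ no_red_book]
  by (auto simp: red_def red_codeg_card)

lemma blue_codeg_less: "blue u v = 1 \<Longrightarrow> blue_codeg u v < int l"
  using common_nbrs_less_if_no_book[OF _ _ _ _ _ no_blue_book]
  by (auto simp: blue_def blue_codeg_card)

lemma red_slack_nonneg: "0 \<le> red u v * (int k - 1 - red_codeg u v)"
  using red_codeg_less[of u v] by (auto simp: red_def)

lemma blue_slack_nonneg: "0 \<le> blue u v * (int l - 1 - blue_codeg u v)"
  using blue_codeg_less[of u v] by (auto simp: blue_def)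

lemma slack_nonneg: "0 \<le> slack u"
  unfolding slack_def using red_slack_nonneg blue_slack_nonneg
  by (intro add_nonneg_nonneg sum_nonneg) auto

lemma slack_eq:
  assumes "u \<in> V"
  shows "slack u = (int k - 1) * deg u + (int l - 1) * (int n - 1 - deg u)
    - (int n - 1) * (int n - 2) + (2 * int n - 3) * deg u - deg u ^ 2 + deg_total - 2 * nbr_deg u"
proof -
  have red_part: "(\<Sum>v\<in>V. red u v * (int k - 1 - red_codeg u v)) = (int k - 1) * deg u - tri_walks u"
  proof -
    have "(\<Sum>v\<in>V. red u v * (int k - 1 - red_codeg u v))
        = (\<Sum>v\<in>V. (int k - 1) * red u v - red u v * red_codeg u v)"
      by (simp add: algebra_simps)
    then show ?thesis
      by (simp add: sum_subtractf sum_distrib_left[symmetric] deg_def tri_walks_def)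
  qed
  have blue_diag: "blue_codeg u u = int n - 1 - deg u"
    using blue_codeg_eq[OF assms assms] by (simp add: red_codeg_diag)
  have "(\<Sum>v\<in>V. blue u v * blue_codeg u v) = (\<Sum>v\<in>V. blue_codeg u v)
      - (\<Sum>v\<in>V. red u v * blue_codeg u v) - blue_codeg u u"
    using assms by (simp add: blue_eq algebra_simps sum_subtractf)
  from this[unfolded sum_blue_codeg[OF assms] sum_red_blue_codeg[OF assms] blue_diag]
  have blue_weighted: "(\<Sum>v\<in>V. blue u v * blue_codeg u v) = (int n - 1) * (int n - 2)
      - (2 * int n - 3) * deg u + deg u ^ 2 - deg_total + 2 * nbr_deg u - tri_walks u"
    by (simp add: algebra_simps power2_eq_square)
  have "(\<Sum>v\<in>V. blue u v * (int l - 1 - blue_codeg u v))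
      = (\<Sum>v\<in>V. (int l - 1) * blue u v - blue u v * blue_codeg u v)"
    by (simp add: algebra_simps)
  also have "\<dots> = (int l - 1) * (int n - 1 - deg u) - (\<Sum>v\<in>V. blue u v * blue_codeg u v)"
    using assms by (simp add: sum_subtractf sum_distrib_left[symmetric] sum_blue)
  finally show ?thesis
    unfolding slack_def red_part blue_weighted by (simp add: algebra_simps)
qed

lemma sum_slack:
  "(\<Sum>u\<in>V. slack u) = (int k - int l + 3 * int n - 3) * deg_total - 3 * (\<Sum>u\<in>V. deg u ^ 2)
    - int n * (int n - 1) * (int n - int l - 1)"
proof -
  have "(\<Sum>u\<in>V. slack u) = (\<Sum>u\<in>V. (int k - int l + 2 * int n - 3) * deg u - deg u ^ 2
      + ((int l - 1) * (int n - 1) - (int n - 1) * (int n - 2) + deg_total) - 2 * nbr_deg u)"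
    by (intro sum.cong refl) (simp add: slack_eq algebra_simps)
  also have "\<dots> = (int k - int l + 2 * int n - 3) * deg_total - (\<Sum>u\<in>V. deg u ^ 2)
      + int n * ((int l - 1) * (int n - 1) - (int n - 1) * (int n - 2) + deg_total)
      - 2 * (\<Sum>u\<in>V. deg u ^ 2)"
    by (simp add: sum.distrib sum_subtractf sum_distrib_left[symmetric] sum_nbr_deg deg_total_def)
  finally show ?thesis by (simp add: algebra_simps)
qed

lemma slack_zero_iff:
  "slack u = 0 \<longleftrightarrow> (\<forall>v\<in>V. red u v * (int k - 1 - red_codeg u v) = 0
    \<and> blue u v * (int l - 1 - blue_codeg u v) = 0)"
  unfolding slack_def
  using sum_nonneg_eq_0_iff[of V "\<lambda>v. red u v * (int k - 1 - red_codeg u v)"]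
    sum_nonneg_eq_0_iff[of V "\<lambda>v. blue u v * (int l - 1 - blue_codeg u v)"]
    sum_nonneg[of V "\<lambda>v. red u v * (int k - 1 - red_codeg u v)"]
    sum_nonneg[of V "\<lambda>v. blue u v * (int l - 1 - blue_codeg u v)"]
    red_slack_nonneg blue_slack_nonneg
  by (auto simp: add_nonneg_eq_0_iff)

lemma slack_zero_tri_walks:
  assumes "slack u = 0"
  shows "tri_walks u = (int k - 1) * deg u"
proof -
  have "tri_walks u = (\<Sum>v\<in>V. (int k - 1) * red u v)"
    unfolding tri_walks_def
  proof (intro sum.cong refl)
    fix v assume "v \<in> V"
    then show "red u v * red_codeg u v = (int k - 1) * red u v"
      using assms unfolding slack_zero_iff by (auto simp: red_def)
  qed
  then show ?thesis by (simp add: deg_def sum_distrib_left)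
qed

end

locale book_free_colouring_4_7 = book_free_colouring 23 c 4 7 for c
begin

lemma slack_and_deg_zero:
  assumes "u \<in> V"
  shows "slack u = 0 \<and> (deg u - 10) * (deg u - 11) = 0"
proof -
  have quadratic_nonneg: "0 \<le> (x - 10) * (x - 11)" for x :: int
    by (cases "x \<le> 10") (auto simp: mult_nonpos_nonpos)
  have "(\<Sum>u\<in>V. slack u + 3 * ((deg u - 10) * (deg u - 11))) = 0"
    using sum_slack
    by (simp add: sum.distrib sum_distrib_left[symmetric] sum_subtractf deg_total_def
        power2_eq_square algebra_simps)
  moreover have "0 \<le> slack v + 3 * ((deg v - 10) * (deg v - 11))" for v
    using slack_nonneg[of v] quadratic_nonneg[of "deg v"] by simp
  ultimately have "slack u + 3 * ((deg u - 10) * (deg u - 11)) = 0"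
    using sum_nonneg_eq_0_iff[of V "\<lambda>u. slack u + 3 * ((deg u - 10) * (deg u - 11))"] assms
    by simp
  then show ?thesis
    using slack_nonneg[of u] quadratic_nonneg[of "deg u"] by linarith
qed

lemma deg_eq_10: "u \<in> V \<Longrightarrow> deg u = 10"
proof -
  assume u: "u \<in> V"
  have "even (3 * deg u)"
    using even_tri_walks[of u] slack_zero_tri_walks[of u] slack_and_deg_zero[OF u] by simp
  moreover have "deg u = 10 \<or> deg u = 11"
    using slack_and_deg_zero[OF u] by simp
  ultimately show "deg u = 10"
    by auto
qed

lemma red_codeg_eq:
  assumes "u \<in> V" "v \<in> V"
  shows "red_codeg u v = 5 + 5 * of_bool (u = v) - 2 * red u v"
proof -
  have "slack u = 0"
    using slack_and_deg_zero[OF assms(1)] by simp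
  then have red_uv: "red u v * (3 - red_codeg u v) = 0"
    and blue_uv: "blue u v * (6 - blue_codeg u v) = 0"
    using assms(2) unfolding slack_zero_iff by auto
  consider "u = v" | "u \<noteq> v" "red u v = 1" | "u \<noteq> v" "blue u v = 1"
    using assms by (auto simp: red_def blue_def)
  then show ?thesis
  proof cases
    case 1
    then show ?thesis
      using assms by (simp add: red_codeg_diag deg_eq_10)
  next
    case 2
    then show ?thesis
      using red_uv by simp
  next
    case 3
    then have "blue_codeg u v = 6" and "red u v = 0"
      using blue_uv assms by (auto simp: blue_eq)
    then show ?thesis
      using blue_codeg_eq[OF assms] 3 assms by (simp add: deg_eq_10)
  qed
qed

lemma eigenvalue_adj: "eigenvalue adj e \<Longrightarrow> e = 10 \<or> e\<^sup>2 + 2 * e - 5 = 0"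
  using eigenvalue_adj_strongly_regular[of 10 5 3 e] deg_eq_10 red_codeg_eq by simp

lemma inconsistent: False
proof -
  obtain es where es: "char_poly adj = (\<Prod>a\<leftarrow>es. [:- a, 1:])" and len: "length es = 23"
    using char_poly_factorized[OF adj_carrier] by blast
  have "sum_list es = 0"
    using sum_eigenvalues_eq_trace[OF adj_carrier es] trace_adj by simp
  moreover have "e = 10 \<or> e\<^sup>2 + 2 * e - 5 = 0" if "e \<in> set es" for e
  proof -
    have "poly (char_poly adj) e = 0"
      unfolding es poly_prod_list using that by (induction es) auto
    then show ?thesis
      using eigenvalue_adj eigenvalue_root_char_poly[OF adj_carrier] by blast
  qed
  ultimately have "11 dvd length es"
    by (intro eleven_dvd_length) auto
  with len show False
    by simp
qed

end

definition red_matrix_21 :: "bool list list" where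
"red_matrix_21 = [[False, True, True, True, False, True, True, False, False, False, False, False, False, False, False, True, True, False, True, False, False],
 [True, False, True, False, False, False, True, True, False, False, True, True, False, True, False, False, True, False, False, False, False],
 [True, True, False, False, False, True, False, False, False, False, False, True, False, True, True, False, False, False, True, False, True],
 [True, False, False, False, True, True, True, False, True, True, False, False, False, False, False, False, False, False, True, True, False],
 [False, False, False, True, False, True, False, False, False, True, True, False, False, True, True, False, True, False, False, True, False],
 [True, False, True, True, True, False, False, False, True, False, False, False, False, False, True, False, True, True, False, False, False],
 [True, True, False, True, False, False, False, True, True, True, False, True, True, False, False, False, False, False, False, False, False],
 [False, True, False, False, False, False, True, False, True, False, False, False, True, True, False, False, True, True, False, True, False],
 [False, False, False, True, False, True, True, True, False, False, False, True, False, False, False, False, False, True, False, True, True],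
 [False, False, False, True, True, False, True, False, False, False, True, True, True, False, True, True, False, False, False, False, False],
 [False, True, False, False, True, False, False, False, False, True, False, True, False, False, False, True, True, False, False, True, True],
 [False, True, True, False, False, False, True, False, True, True, True, False, False, False, True, False, False, False, False, False, True],
 [False, False, False, False, False, False, True, True, False, True, False, False, False, True, True, True, False, True, True, False, False],
 [False, True, True, False, True, False, False, True, False, False, False, False, True, False, True, False, False, False, True, True, False],
 [False, False, True, False, True, True, False, False, False, True, False, True, True, True, False, False, False, True, False, False, False],
 [True, False, False, False, False, False, False, False, False, True, True, False, True, False, False, False, True, True, True, False, True],
 [True, True, False, False, True, True, False, True, False, False, True, False, False, False, False, True, False, True, False, False, False],
 [False, False, False, False, False, True, False, True, True, False, False, False, True, False, True, True, True, False, False, False, True],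
 [True, False, True, True, False, False, False, False, False, False, False, False, True, True, False, True, False, False, False, True, True],
 [False, False, False, True, True, False, False, True, True, False, True, False, False, True, False, False, False, False, True, False, True],
 [False, False, True, False, False, False, False, False, True, False, True, True, False, False, False, True, False, True, True, True, False]]"

definition colouring_21 :: "nat \<Rightarrow> nat \<Rightarrow> bool" where
  "colouring_21 x y \<longleftrightarrow> x < 21 \<and> y < 21 \<and> red_matrix_21 ! x ! y"

lemma colouring_21_is_colouring: "colouring {..<N} colouring_21"
proof -
  have "list_all (\<lambda>x. list_all (\<lambda>y. colouring_21 x y = colouring_21 y x) [0..<21]) [0..<21]"
    unfolding colouring_21_def red_matrix_21_def by code_simp
  then show ?thesis
    unfolding colouring_def list_all_iff by (auto simp: colouring_21_def)
qed

lemma no_red_book_colouring_21: "\<not> has_book {..<21} colouring_21 4"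
  unfolding has_book_lessThan_code colouring_21_def red_matrix_21_def by code_simp

lemma no_blue_book_colouring_21: "\<not> has_book {..<21} (\<lambda>x y. \<not> colouring_21 x y) 7"
  unfolding has_book_lessThan_code colouring_21_def red_matrix_21_def by code_simp

lemma not_book_arrows_21:
  assumes "N \<le> 21"
  shows "\<not> book_arrows N 4 7"
proof -
  have "{..<N} \<subseteq> {..<21}"
    using assms by auto
  then have "\<not> has_book {..<N} colouring_21 4" "\<not> has_book {..<N} (\<lambda>x y. \<not> colouring_21 x y) 7"
    using no_red_book_colouring_21 no_blue_book_colouring_21 has_book_mono by blast+
  then show ?thesis
    using colouring_21_is_colouring unfolding book_arrows_def by blast
qed

lemma book_arrows_23: "book_arrows 23 4 7"
  unfolding book_arrows_def
proof (intro allI impI)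
  fix c
  assume "colouring {..<23} c"
  show "has_book {..<23} c 4 \<or> has_book {..<23} (\<lambda>x y. \<not> c x y) 7"
  proof (rule ccontr)
    assume "\<not> ?thesis"
    with \<open>colouring {..<23} c\<close> interpret book_free_colouring_4_7 c
      by unfold_locales auto
    show False
      by (rule inconsistent)
  qed
qed

theorem mainTheorem8:
  shows "22 \<le> ramsey_book 4 7 \<and> ramsey_book 4 7 \<le> 23"
proof
  show "ramsey_book 4 7 \<le> 23"
    unfolding ramsey_book_def by (rule Least_le) (rule book_arrows_23)
  have "22 \<le> N" if "book_arrows N 4 7" for N
    using that not_book_arrows_21[of N] by (cases "N \<le> 21") auto
  then show "22 \<le> ramsey_book 4 7"
    unfolding ramsey_book_def by (rule LeastI2[of "\<lambda>N. book_arrows N 4 7", OF book_arrows_23])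
qed

end
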